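(* Let $w$ be a primitive word over a totally ordered alphabet with a special factorization $w=a_1\pi_1a_2\pi_2\cdots\pi_{k-1}a_k$, and suppose $w$ is conjugate to $W=a_k\pi_{k-1}a_{k-1}\cdots\pi_1a_1$. Let $w'$ and $w''$ be two consecutive rows of the Burrows–Wheeler matrix of $w$, with $w'$ immediately preceding $w''$ (so $w''$ is the lexicographically next conjugate after $w'$). Then there exist $i\in\{1,\dots,k-1\}$ and a factorization $\pi_i=uv$ such that $$w'=v\,a_i\pi_{i-1}a_{i-1}\cdots\pi_1a_1\,a_k\pi_{k-1}a_{k-1}\cdots\pi_{i+1}a_{i+1}\,u$$ and $$w''=v\,a_{i+1}\pi_{i+1}a_{i+2}\cdots\pi_{k-1}a_k\,a_1\pi_1a_2\cdots\pi_{i-1}a_i\,u.$$ Moreover, $w$ is the lexicographically smallest and $W$ the lexicographically largest element of their (common) conjugation class.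
   Context: A special factorization of $w$ is a factorization $w=a_1\pi_1a_2\cdots\pi_{k-1}a_k$ where the set of letters occurring in $w$ is $\{a_1<a_2<\cdots<a_k\}$ and $\pi_1,\dots,\pi_{k-1}$ are arbitrary words. Two words are conjugate if they are of the form $xy$ and $yx$. Words are compared in lexicographic order (a proper prefix is smaller). The Burrows–Wheeler matrix of a primitive word $w$ is the matrix whose rows are the distinct conjugates of $w$, listed in increasing lexicographic order, each row consisting of the letters of the corresponding conjugate. *)

theory Defs
  imports Main
begin

definition conjugate :: "'a list \<Rightarrow> 'a list \<Rightarrow> bool" where
  "conjugate w z \<longleftrightarrow> (\<exists>x y. w = x @ y \<and> z = y @ x)"

definition primitive :: "'a list \<Rightarrow> bool" where
  "primitive w \<longleftrightarrow> w \<noteq> [] \<and> (\<forall>u n. w = concat (replicate n u) \<longrightarrow> n = 1)"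

(* lexicographic order, a proper prefix being smaller *)
definition lex_less :: "'a::linorder list \<Rightarrow> 'a list \<Rightarrow> bool" where
  "lex_less x y \<longleftrightarrow> ord_class.lexordp x y"

definition lex_le :: "'a::linorder list \<Rightarrow> 'a list \<Rightarrow> bool" where
  "lex_le x y \<longleftrightarrow> ord_class.lexordp_eq x y"

(* Letters a 1 .. a k and words p 1 .. p (k-1), indexed from 1 as in the paper. *)

(* fseg a p i j = a_i p_i a_(i+1) ... p_(j-1) a_j   (i \<le> j) *)
definition fseg :: "(nat \<Rightarrow> 'a) \<Rightarrow> (nat \<Rightarrow> 'a list) \<Rightarrow> nat \<Rightarrow> nat \<Rightarrow> 'a list" where
  "fseg a p i j = a i # concat (map (\<lambda>t. p t @ [a (t + 1)]) [i..<j])"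

(* rseg a p i j = a_i p_(i-1) a_(i-1) ... p_j a_j   (j \<le> i) *)
definition rseg :: "(nat \<Rightarrow> 'a) \<Rightarrow> (nat \<Rightarrow> 'a list) \<Rightarrow> nat \<Rightarrow> nat \<Rightarrow> 'a list" where
  "rseg a p i j = a i # concat (map (\<lambda>t. p (t - 1) @ [a (t - 1)]) (rev [j+1..<i+1]))"

definition special_factorization ::
  "'a::linorder list \<Rightarrow> nat \<Rightarrow> (nat \<Rightarrow> 'a) \<Rightarrow> (nat \<Rightarrow> 'a list) \<Rightarrow> bool" where
  "special_factorization w k a p \<longleftrightarrow>
     1 \<le> k \<and> strict_mono_on {1..k} a \<and> set w = a ` {1..k} \<and> w = fseg a p 1 k"

definition consecutive_BW_rows :: "'a::linorder list \<Rightarrow> 'a list \<Rightarrow> 'a list \<Rightarrow> bool" where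
  "consecutive_BW_rows w w' w'' \<longleftrightarrow>
     conjugate w w' \<and> conjugate w w'' \<and> lex_less w' w'' \<and>
     \<not> (\<exists>z. conjugate w z \<and> lex_less w' z \<and> lex_less z w'')"

end

theory Submission
  imports Defs "HOL-Library.List_Lexorder"
begin

(* Every nontrivial cut of w = a_1 p_1 ... a_k falls inside some p_i = u v, and gives the conjugate
   v a_(i+1) ... a_i u; the same cut of W gives v a_i ... a_(i+1) u, which is smaller because
   a_i < a_(i+1). For primitive w the first map enumerates the conjugates other than w, the second
   those other than W, each exactly once. In a finite chain, such a pairing, in which each element
   but the greatest is the lower end of exactly one pair and each element but the least the upper
   end of exactly one pair, forces w and W to be the extremes and the pairs to be exactly the
   consecutive elements. *)

lemma lex_less_iff_less: "lex_less x y \<longleftrightarrow> x < y"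
  by (simp add: lex_less_def lexordp_conv_lexord list_less_def)

lemma lex_le_iff_less_eq: "lex_le x y \<longleftrightarrow> x \<le> y"
  by (auto simp add: lex_le_def lexordp_eq_conv_lexord list_le_def lexordp_conv_lexord list_less_def)

lemma append_less_append_iff: "u @ x < u @ y \<longleftrightarrow> x < (y :: 'a::linorder list)"
  by (induction u) auto

lemma conjugate_iff_rotate: "conjugate w z \<longleftrightarrow> (\<exists>m. z = rotate m w)"
proof
  assume "conjugate w z"
  then obtain x y where "w = x @ y" "z = y @ x"
    unfolding conjugate_def by blast
  then show "\<exists>m. z = rotate m w"
    by (metis rotate_append)
next
  assume "\<exists>m. z = rotate m w"
  then obtain m where "z = drop (m mod length w) w @ take (m mod length w) w"
    by (auto simp: rotate_drop_take)
  then show "conjugate w z"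
    unfolding conjugate_def by (metis append_take_drop_id)
qed

lemma conjugate_sym: "conjugate w z \<Longrightarrow> conjugate z w"
  unfolding conjugate_def by blast

lemma conjugate_append: "conjugate (x @ y) (y @ x)"
  unfolding conjugate_def by blast

lemma conjugate_trans: "conjugate u v \<Longrightarrow> conjugate v w \<Longrightarrow> conjugate u w"
  by (metis conjugate_iff_rotate rotate_rotate)

lemma comm_append_imp_powers:
  "x @ y = y @ x \<Longrightarrow> \<exists>r i j. x = concat (replicate i r) \<and> y = concat (replicate j r)"
proof (induction "length x + length y" arbitrary: x y rule: less_induct)
  case less
  show ?case
  proof (cases "x = [] \<or> y = []")
    case True
    then show ?thesis
      by (metis concat_replicate_trivial replicate_0 replicate_Suc concat.simps append_Nil2 One_nat_def)
  next
    case nonempty: False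
    show ?thesis
    proof (cases "length x \<le> length y")
      case True
      then obtain y' where y: "y = x @ y'"
        using less.prems by (metis append_eq_append_conv_if append_take_drop_id)
      with less.prems nonempty obtain r i j
        where "x = concat (replicate i r)" "y' = concat (replicate j r)"
        using less.hyps[of x y'] by auto
      then show ?thesis
        using y by (metis concat_append replicate_add)
    next
      case False
      then obtain x' where x: "x = y @ x'"
        using less.prems by (metis append_eq_append_conv_if append_take_drop_id nat_le_linear)
      with less.prems nonempty obtain r i j
        where "x' = concat (replicate i r)" "y = concat (replicate j r)"
        using less.hyps[of x' y] by auto
      then show ?thesis
        using x by (metis concat_append replicate_add)
    qed
  qed
qed

lemma primitive_rotate_neq:
  assumes "primitive w" "0 < d" "d < length w"
  shows "rotate d w \<noteq> w"
proof
  assume "rotate d w = w"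
  then have "take d w @ drop d w = drop d w @ take d w"
    using assms by (simp add: rotate_drop_take)
  then obtain r i j
    where x: "take d w = concat (replicate i r)" and y: "drop d w = concat (replicate j r)"
    using comm_append_imp_powers by blast
  have "take d w \<noteq> []" "drop d w \<noteq> []"
    using assms by auto
  then have "i \<noteq> 0" "j \<noteq> 0"
    using x y by auto
  moreover have "w = concat (replicate (i + j) r)"
    by (metis x y append_take_drop_id concat_append replicate_add)
  ultimately show False
    using assms(1) unfolding primitive_def by fastforce
qed

lemma inj_on_rotate_primitive:
  assumes "primitive w"
  shows "inj_on (\<lambda>m. rotate m w) {..<length w}"
proof -
  have "m = m'" if "m < m'" "m' < length w" "rotate m w = rotate m' w" for m m'
  proof -
    have "rotate (length w - m' + m) w = rotate (length w - m') (rotate m' w)"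
      by (metis rotate_rotate that(3))
    also have "\<dots> = w"
      using that(2) by (simp add: rotate_rotate del: rotate_append)
    finally have "rotate (length w - m' + m) w = w" .
    moreover have "0 < length w - m' + m" "length w - m' + m < length w"
      using that by auto
    ultimately show ?thesis
      using primitive_rotate_neq[OF assms] by metis
  qed
  then show ?thesis
    by (metis inj_onI lessThan_iff nat_neq_iff)
qed

lemma card_conjugates_primitive:
  assumes "primitive w"
  shows "card {z. conjugate w z} = length w"
proof -
  have "w \<noteq> []"
    using assms unfolding primitive_def by simp
  then have "{z. conjugate w z} = (\<lambda>m. rotate m w) ` {..<length w}"
    unfolding conjugate_iff_rotate by (auto intro: rotate_conv_mod)
  then show ?thesis
    using card_image[OF inj_on_rotate_primitive[OF assms]] by simp
qed

lemma append_eq_append3E: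
  assumes "x @ y = l @ m @ r"
  obtains (left) ys where "ys \<noteq> []" "x @ ys = l" "y = ys @ m @ r"
    | (middle) u v where "m = u @ v" "x = l @ u" "y = v @ r"
    | (right) xs where "xs \<noteq> []" "x = l @ m @ xs" "xs @ y = r"
proof -
  obtain us where "x @ us = l \<and> y = us @ m @ r \<or> x = l @ us \<and> us @ y = m @ r"
    using assms by (auto simp: append_eq_append_conv2)
  then show thesis
  proof
    assume "x @ us = l \<and> y = us @ m @ r"
    then show thesis
      using left middle[of "[]" m] by (cases "us = []") auto
  next
    assume x: "x = l @ us \<and> us @ y = m @ r"
    then obtain vs where "us = m @ vs \<and> vs @ y = r \<or> us @ vs = m \<and> y = vs @ r"
      by (auto simp: append_eq_append_conv2)
    then show thesis
      using x middle right[of vs] middle[of m "[]"] by (cases "vs = []") auto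
  qed
qed

lemma fseg_refl [simp]: "fseg a p i i = [a i]"
  by (simp add: fseg_def)

lemma rseg_refl [simp]: "rseg a p i i = [a i]"
  by (simp add: rseg_def)

lemma fseg_split:
  assumes "i \<le> m" "m < j"
  shows "fseg a p i j = fseg a p i m @ p m @ fseg a p (Suc m) j"
proof -
  have "[i..<j] = [i..<m] @ m # [Suc m..<j]"
    using assms upt_add_eq_append[of i m "j - m"] by (simp add: upt_conv_Cons)
  then show ?thesis
    by (simp add: fseg_def)
qed

lemma rseg_split:
  assumes "j \<le> m" "m < i"
  shows "rseg a p i j = rseg a p i (Suc m) @ p m @ rseg a p m j"
proof -
  have "[j + 1..<i + 1] = [j + 1..<m + 1] @ (m + 1) # [Suc m + 1..<i + 1]"
    using assms upt_add_eq_append[of "j + 1" "m + 1" "i - m"] by (simp add: upt_conv_Cons)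
  then show ?thesis
    by (simp add: rseg_def)
qed

lemma length_fseg: "length (fseg a p h k) = Suc (\<Sum>t\<in>{h..<k}. Suc (length (p t)))"
  by (simp add: fseg_def length_concat sum_set_upt_conv_sum_list_nat[symmetric] comp_def)

lemma fseg_nontrivial_split:
  assumes "x @ y = fseg a p h k" "x \<noteq> []" "y \<noteq> []"
  shows "\<exists>i u v. h \<le> i \<and> i < k \<and> p i = u @ v \<and>
           x = fseg a p h i @ u \<and> y = v @ fseg a p (Suc i) k"
  using assms
proof (induction k arbitrary: y)
  case 0
  then show ?case
    by (auto simp: fseg_def append_eq_Cons_conv)
next
  case (Suc k)
  show ?case
  proof (cases "h \<le> k")
    case False
    then show ?thesis
      using Suc.prems by (auto simp: fseg_def append_eq_Cons_conv)
  next
    case True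
    then have "x @ y = fseg a p h k @ p k @ [a (Suc k)]"
      using Suc.prems(1) fseg_split[of h k "Suc k"] by simp
    then show ?thesis
    proof (cases rule: append_eq_append3E)
      case (left ys)
      then obtain i u v where "h \<le> i" "i < k" "p i = u @ v"
          "x = fseg a p h i @ u" "ys = v @ fseg a p (Suc i) k"
        using Suc.IH Suc.prems(2) by blast
      moreover have "fseg a p (Suc i) (Suc k) = fseg a p (Suc i) k @ p k @ [a (Suc k)]"
        using \<open>i < k\<close> fseg_split[of "Suc i" k "Suc k"] by simp
      ultimately show ?thesis
        using left(3) by (intro exI[of _ i] exI[of _ u] exI[of _ v]) auto
    next
      case (middle u v)
      then show ?thesis
        using True by (intro exI[of _ k] exI[of _ u] exI[of _ v]) auto
    next
      case (right xs)
      then show ?thesis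
        using Suc.prems(3) by (auto simp: append_eq_Cons_conv)
    qed
  qed
qed

lemma rseg_nontrivial_split:
  assumes "x @ y = rseg a p i j" "x \<noteq> []" "y \<noteq> []"
  shows "\<exists>m u v. j \<le> m \<and> m < i \<and> p m = u @ v \<and>
           x = rseg a p i (Suc m) @ u \<and> y = v @ rseg a p m j"
  using assms
proof (induction i arbitrary: x)
  case 0
  then show ?case
    by (auto simp: rseg_def append_eq_Cons_conv)
next
  case (Suc i)
  show ?case
  proof (cases "j \<le> i")
    case False
    then show ?thesis
      using Suc.prems by (auto simp: rseg_def append_eq_Cons_conv)
  next
    case True
    then have "x @ y = [a (Suc i)] @ p i @ rseg a p i j"
      using Suc.prems(1) rseg_split[of j i "Suc i"] by simp
    then show ?thesis
    proof (cases rule: append_eq_append3E)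
      case (left ys)
      then show ?thesis
        using Suc.prems(2) by (auto simp: append_eq_Cons_conv)
    next
      case (middle u v)
      then show ?thesis
        using True by (intro exI[of _ i] exI[of _ u] exI[of _ v]) auto
    next
      case (right xs)
      then obtain m u v where "j \<le> m" "m < i" "p m = u @ v"
          "xs = rseg a p i (Suc m) @ u" "y = v @ rseg a p m j"
        using Suc.IH Suc.prems(3) by blast
      moreover have "rseg a p (Suc i) (Suc m) = [a (Suc i)] @ p i @ rseg a p i (Suc m)"
        using \<open>m < i\<close> rseg_split[of "Suc m" i "Suc i"] by simp
      ultimately show ?thesis
        using right(2) by (intro exI[of _ m] exI[of _ u] exI[of _ v]) auto
    qed
  qed
qed

(* (i, j) is the cut after the first j letters of p i; j = 0 and j = length (p i) are the cuts
   right after a i and right before a (i + 1). *)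
definition cut_positions :: "(nat \<Rightarrow> 'a list) \<Rightarrow> nat \<Rightarrow> (nat \<times> nat) set" where
  "cut_positions p k = (SIGMA i:{1..<k}. {..length (p i)})"

definition fseg_rotation :: "(nat \<Rightarrow> 'a) \<Rightarrow> (nat \<Rightarrow> 'a list) \<Rightarrow> nat \<Rightarrow> nat \<times> nat \<Rightarrow> 'a list" where
  "fseg_rotation a p k = (\<lambda>(i, j). drop j (p i) @ fseg a p (i + 1) k @ fseg a p 1 i @ take j (p i))"

definition rseg_rotation :: "(nat \<Rightarrow> 'a) \<Rightarrow> (nat \<Rightarrow> 'a list) \<Rightarrow> nat \<Rightarrow> nat \<times> nat \<Rightarrow> 'a list" where
  "rseg_rotation a p k = (\<lambda>(i, j). drop j (p i) @ rseg a p i 1 @ rseg a p k (i + 1) @ take j (p i))"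

lemma finite_cut_positions: "finite (cut_positions p k)"
  by (simp add: cut_positions_def)

lemma card_cut_positions: "Suc (card (cut_positions p k)) = length (fseg a p 1 k)"
  by (simp add: cut_positions_def card_SigmaI length_fseg)

lemma fseg_rotation_conjugate:
  assumes "x \<in> cut_positions p k"
  shows "conjugate (fseg a p 1 k) (fseg_rotation a p k x)"
proof -
  obtain i j where x: "x = (i, j)" "1 \<le> i" "i < k"
    using assms by (auto simp: cut_positions_def)
  then have "fseg a p 1 k = fseg a p 1 i @ p i @ fseg a p (i + 1) k"
    using fseg_split[of 1 i k a p] by simp
  then have "fseg a p 1 k = (fseg a p 1 i @ take j (p i)) @ (drop j (p i) @ fseg a p (i + 1) k)"
    by (metis append_assoc append_take_drop_id)
  then show ?thesis
    using conjugate_append[of "fseg a p 1 i @ take j (p i)" "drop j (p i) @ fseg a p (i + 1) k"]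
    by (simp add: x fseg_rotation_def)
qed

lemma rseg_rotation_conjugate:
  assumes "x \<in> cut_positions p k"
  shows "conjugate (rseg a p k 1) (rseg_rotation a p k x)"
proof -
  obtain i j where x: "x = (i, j)" "1 \<le> i" "i < k"
    using assms by (auto simp: cut_positions_def)
  then have "rseg a p k 1 = rseg a p k (i + 1) @ p i @ rseg a p i 1"
    using rseg_split[of 1 i k a p] by simp
  then have "rseg a p k 1 = (rseg a p k (i + 1) @ take j (p i)) @ (drop j (p i) @ rseg a p i 1)"
    by (metis append_assoc append_take_drop_id)
  then show ?thesis
    using conjugate_append[of "rseg a p k (i + 1) @ take j (p i)" "drop j (p i) @ rseg a p i 1"]
    by (simp add: x rseg_rotation_def)
qed

lemma conjugate_fseg_eq_rotation:
  assumes "conjugate (fseg a p 1 k) z" "z \<noteq> fseg a p 1 k"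
  shows "z \<in> fseg_rotation a p k ` cut_positions p k"
proof -
  obtain x y where xy: "x @ y = fseg a p 1 k" "z = y @ x" "x \<noteq> []" "y \<noteq> []"
    using assms unfolding conjugate_def by force
  then obtain i u v where "1 \<le> i" "i < k" "p i = u @ v"
      "x = fseg a p 1 i @ u" "y = v @ fseg a p (i + 1) k"
    using fseg_nontrivial_split[OF xy(1,3,4)] by auto
  then have "(i, length u) \<in> cut_positions p k" "z = fseg_rotation a p k (i, length u)"
    using xy(2) by (auto simp: cut_positions_def fseg_rotation_def)
  then show ?thesis
    by blast
qed

lemma conjugate_rseg_eq_rotation:
  assumes "conjugate (rseg a p k 1) z" "z \<noteq> rseg a p k 1"
  shows "z \<in> rseg_rotation a p k ` cut_positions p k"
proof -
  obtain x y where xy: "x @ y = rseg a p k 1" "z = y @ x" "x \<noteq> []" "y \<noteq> []"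
    using assms unfolding conjugate_def by force
  then obtain i u v where "1 \<le> i" "i < k" "p i = u @ v"
      "x = rseg a p k (i + 1) @ u" "y = v @ rseg a p i 1"
    using rseg_nontrivial_split[OF xy(1,3,4)] by auto
  then have "(i, length u) \<in> cut_positions p k" "z = rseg_rotation a p k (i, length u)"
    using xy(2) by (auto simp: cut_positions_def rseg_rotation_def)
  then show ?thesis
    by blast
qed

lemma rseg_rotation_less_fseg_rotation:
  fixes a :: "nat \<Rightarrow> 'a::linorder"
  assumes "strict_mono_on {1..k} a" "x \<in> cut_positions p k"
  shows "rseg_rotation a p k x < fseg_rotation a p k x"
proof -
  obtain i j where x: "x = (i, j)" "1 \<le> i" "i < k"
    using assms(2) by (auto simp: cut_positions_def)
  then have "a i < a (i + 1)"
    using assms(1) by (simp add: strict_mono_on_def)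
  moreover obtain r f where "rseg a p i 1 = a i # r" "fseg a p (i + 1) k = a (i + 1) # f"
    by (simp add: fseg_def rseg_def)
  ultimately show ?thesis
    unfolding x fseg_rotation_def rseg_rotation_def by (simp add: append_less_append_iff)
qed

lemma bij_betw_Diff_singleton_if_covers:
  assumes "finite I" "card C = Suc (card I)" "f ` I \<subseteq> C" "C - {c} \<subseteq> f ` I"
  shows "bij_betw f I (C - {c})"
proof -
  have "finite C"
    using assms(2) card.infinite by fastforce
  have small: "card (f ` I) < card C"
    using card_image_le[OF assms(1), of f] assms(2) by simp
  then have "f ` I \<noteq> C"
    by blast
  then have "c \<in> C" and image: "f ` I = C - {c}"
    using assms(3,4) by blast+
  then have "card (f ` I) = card I"
    using assms(2) \<open>c \<in> C\<close> \<open>finite C\<close> by simp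
  then show ?thesis
    using image eq_card_imp_inj_on[OF assms(1), of f] by (simp add: bij_betw_def)
qed

locale order_pairing =
  fixes C :: "'b::linorder set" and I :: "'i set" and lo hi :: "'i \<Rightarrow> 'b" and cmin cmax :: 'b
  assumes finite_C: "finite C" and cmin_in: "cmin \<in> C" and cmax_in: "cmax \<in> C"
    and lo_bij: "bij_betw lo I (C - {cmax})" and hi_bij: "bij_betw hi I (C - {cmin})"
    and lo_less_hi: "\<And>x. x \<in> I \<Longrightarrow> lo x < hi x"
begin

lemma Min_eq: "Min C = cmin"
proof (rule ccontr)
  assume "Min C \<noteq> cmin"
  moreover have "Min C \<in> C"
    using finite_C cmin_in by (intro Min_in) auto
  ultimately have "Min C \<in> hi ` I"
    using bij_betw_imp_surj_on[OF hi_bij] by blast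
  then obtain x where x: "x \<in> I" "hi x = Min C"
    by auto
  then have "lo x \<in> C"
    using lo_bij by (auto simp: bij_betw_def)
  then show False
    using x lo_less_hi[of x] finite_C by (metis Min_le leD)
qed

lemma Max_eq: "Max C = cmax"
proof (rule ccontr)
  assume "Max C \<noteq> cmax"
  moreover have "Max C \<in> C"
    using finite_C cmax_in by (intro Max_in) auto
  ultimately have "Max C \<in> lo ` I"
    using bij_betw_imp_surj_on[OF lo_bij] by blast
  then obtain x where x: "x \<in> I" "lo x = Max C"
    by auto
  then have "hi x \<in> C"
    using hi_bij by (auto simp: bij_betw_def)
  then show False
    using x lo_less_hi[of x] finite_C by (metis Max_ge leD)
qed

(* hi maps J = {x. c \<le> lo x} injectively into U = {z. c' \<le> z}; as lo maps J onto
   insert c U - {cmax}, both sets have the same size, so c' = hi x for some x \<in> J, and then lo x = c. *)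
lemma consecutive_eq:
  assumes "c \<in> C" "c' \<in> C" "c < c'" "\<not> (\<exists>z\<in>C. c < z \<and> z < c')"
  shows "\<exists>x\<in>I. lo x = c \<and> hi x = c'"
proof -
  define J where "J = {x \<in> I. c \<le> lo x}"
  define U where "U = {z \<in> C. c' \<le> z}"
  have "finite U"
    using finite_C by (simp add: U_def)
  have "cmax \<in> U"
    using Max_eq Max_ge[OF finite_C assms(2)] cmax_in by (simp add: U_def)
  have "c \<notin> U"
    using assms(3) by (simp add: U_def not_le)
  have "lo ` J = {z \<in> lo ` I. c \<le> z}"
    by (auto simp: J_def)
  also have "\<dots> = {z \<in> C. c \<le> z} - {cmax}"
    using bij_betw_imp_surj_on[OF lo_bij] by auto
  also have "\<dots> = insert c (U - {cmax})"
    using assms \<open>cmax \<in> U\<close> \<open>c \<notin> U\<close> by (auto simp: U_def not_less)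
  finally have "card (lo ` J) = card U"
    using \<open>finite U\<close> \<open>cmax \<in> U\<close> \<open>c \<notin> U\<close> card_Diff1_less[OF \<open>finite U\<close> \<open>cmax \<in> U\<close>]
    by (simp add: card_Diff_singleton)
  moreover have "inj_on lo J" "inj_on hi J"
    using lo_bij hi_bij by (auto simp: J_def bij_betw_def intro: inj_on_subset)
  ultimately have card_hi_J: "card (hi ` J) = card U"
    by (simp add: card_image)
  have "hi ` J \<subseteq> U"
  proof
    fix z assume "z \<in> hi ` J"
    then obtain x where "x \<in> I" "c \<le> lo x" "z = hi x"
      by (auto simp: J_def)
    moreover have "hi x \<in> C"
      using hi_bij \<open>x \<in> I\<close> by (auto simp: bij_betw_def)
    ultimately show "z \<in> U"
      using lo_less_hi[of x] assms(4) by (auto simp: U_def not_less)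
  qed
  then have "hi ` J = U"
    using card_subset_eq[OF \<open>finite U\<close>] card_hi_J by blast
  then obtain x where x: "x \<in> J" "hi x = c'"
    using assms(2) by (force simp: U_def)
  moreover have "lo x \<in> C"
    using lo_bij x by (auto simp: J_def bij_betw_def)
  ultimately have "lo x = c"
    using lo_less_hi[of x] assms(4) by (auto simp: J_def order.order_iff_strict)
  then show ?thesis
    using x by (auto simp: J_def)
qed

end

lemma bij_betw_fseg_rotation:
  assumes "primitive (fseg a p 1 k)"
  shows "bij_betw (fseg_rotation a p k) (cut_positions p k)
           ({z. conjugate (fseg a p 1 k) z} - {fseg a p 1 k})"
proof (rule bij_betw_Diff_singleton_if_covers)
  show "card {z. conjugate (fseg a p 1 k) z} = Suc (card (cut_positions p k))"
    using card_conjugates_primitive[OF assms] card_cut_positions[of p k a] by simp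
  show "fseg_rotation a p k ` cut_positions p k \<subseteq> {z. conjugate (fseg a p 1 k) z}"
    using fseg_rotation_conjugate by blast
  show "{z. conjugate (fseg a p 1 k) z} - {fseg a p 1 k} \<subseteq> fseg_rotation a p k ` cut_positions p k"
    using conjugate_fseg_eq_rotation by blast
qed (rule finite_cut_positions)

lemma bij_betw_rseg_rotation:
  assumes "primitive (fseg a p 1 k)" "conjugate (fseg a p 1 k) (rseg a p k 1)"
  shows "bij_betw (rseg_rotation a p k) (cut_positions p k)
           ({z. conjugate (fseg a p 1 k) z} - {rseg a p k 1})"
proof -
  have same_class: "{z. conjugate (fseg a p 1 k) z} = {z. conjugate (rseg a p k 1) z}"
    using assms(2) conjugate_sym conjugate_trans by blast
  show ?thesis
    unfolding same_class
  proof (rule bij_betw_Diff_singleton_if_covers)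
    show "card {z. conjugate (rseg a p k 1) z} = Suc (card (cut_positions p k))"
      using card_conjugates_primitive[OF assms(1)] card_cut_positions[of p k a] same_class by simp
    show "rseg_rotation a p k ` cut_positions p k \<subseteq> {z. conjugate (rseg a p k 1) z}"
      using rseg_rotation_conjugate by blast
    show "{z. conjugate (rseg a p k 1) z} - {rseg a p k 1} \<subseteq> rseg_rotation a p k ` cut_positions p k"
      using conjugate_rseg_eq_rotation by blast
  qed (rule finite_cut_positions)
qed

lemma order_pairing_conjugates:
  fixes a :: "nat \<Rightarrow> 'a::linorder"
  assumes "primitive (fseg a p 1 k)" "strict_mono_on {1..k} a"
    and "conjugate (fseg a p 1 k) (rseg a p k 1)"
  shows "order_pairing {z. conjugate (fseg a p 1 k) z} (cut_positions p k)
           (rseg_rotation a p k) (fseg_rotation a p k) (fseg a p 1 k) (rseg a p k 1)"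
proof
  show "finite {z. conjugate (fseg a p 1 k) z}"
    using card_conjugates_primitive[OF assms(1)] assms(1)
    by (metis card.infinite length_0_conv primitive_def)
  show "fseg a p 1 k \<in> {z. conjugate (fseg a p 1 k) z}"
    using conjugate_append[of _ "[]"] by simp
  show "rseg a p k 1 \<in> {z. conjugate (fseg a p 1 k) z}"
    using assms(3) by simp
qed (use bij_betw_fseg_rotation bij_betw_rseg_rotation rseg_rotation_less_fseg_rotation assms in auto)

theorem lemma4p5:
  fixes w :: "'a::linorder list" and k :: nat and a :: "nat \<Rightarrow> 'a" and p :: "nat \<Rightarrow> 'a list"
  assumes "primitive w"
    and "special_factorization w k a p"
    and "conjugate w (rseg a p k 1)"
  shows "(\<forall>w' w''. consecutive_BW_rows w w' w'' \<longrightarrow>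
            (\<exists>i u v. 1 \<le> i \<and> i \<le> k - 1 \<and> p i = u @ v \<and>
               w' = v @ rseg a p i 1 @ rseg a p k (i + 1) @ u \<and>
               w'' = v @ fseg a p (i + 1) k @ fseg a p 1 i @ u))
       \<and> (\<forall>z. conjugate w z \<longrightarrow> lex_le w z)
       \<and> (\<forall>z. conjugate w z \<longrightarrow> lex_le z (rseg a p k 1))"
proof -
  from assms(2) have mono: "strict_mono_on {1..k} a" and w: "w = fseg a p 1 k"
    by (auto simp: special_factorization_def)
  interpret order_pairing "{z. conjugate w z}" "cut_positions p k" "rseg_rotation a p k"
    "fseg_rotation a p k" w "rseg a p k 1"
    using order_pairing_conjugates[OF _ mono] assms(1,3) unfolding w by blast
  have extremes: "lex_le w z \<and> lex_le z (rseg a p k 1)" if "conjugate w z" for z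
    using Min_le[OF finite_C, of z] Max_ge[OF finite_C, of z] that
    by (simp add: Min_eq Max_eq lex_le_iff_less_eq)
  have rows: "\<exists>i u v. 1 \<le> i \<and> i \<le> k - 1 \<and> p i = u @ v \<and>
               w' = v @ rseg a p i 1 @ rseg a p k (i + 1) @ u \<and>
               w'' = v @ fseg a p (i + 1) k @ fseg a p 1 i @ u"
    if "consecutive_BW_rows w w' w''" for w' w''
  proof -
    have "w' \<in> {z. conjugate w z}" "w'' \<in> {z. conjugate w z}" "w' < w''"
      "\<not> (\<exists>z\<in>{z. conjugate w z}. w' < z \<and> z < w'')"
      using that by (auto simp: consecutive_BW_rows_def lex_less_iff_less)
    from consecutive_eq[OF this] obtain x where x: "x \<in> cut_positions p k"
        "rseg_rotation a p k x = w'" "fseg_rotation a p k x = w''"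
      by blast
    obtain i j where "x = (i, j)"
      by fastforce
    with x show ?thesis
      by (intro exI[of _ i] exI[of _ "take j (p i)"] exI[of _ "drop j (p i)"])
        (auto simp: cut_positions_def fseg_rotation_def rseg_rotation_def)
  qed
  show ?thesis
    using rows extremes by blast
qed

end
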